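(* Let $\phi$ be a parabolic holomorphic self-map of $\mathbb D$ of zero hyperbolic step. Then there do not exist a non-constant Bloch function $f$ and a unimodular number $\tau$ satisfying $f\circ\phi=\tau f$.
   Context: $\mathbb D$ is the open unit disk, $\mathbb T$ its boundary. For $n\in\mathbb N_0$, $\phi^{[n]}$ denotes the $n$-th iterate of $\phi$. The pseudo-hyperbolic distance is $\rho(z_1,z_2)=\left|\frac{z_2-z_1}{1-\overline{z_2}z_1}\right|$. A holomorphic self-map $\phi$ of $\mathbb D$ is of zero hyperbolic step if $\lim_{n\to\infty}\rho(\phi^{[n]}(z_0),\phi^{[n+1]}(z_0))=0$ for some (equivalently every) $z_0\in\mathbb D$. It is parabolic if its Denjoy--Wolff point lies on $\mathbb T$ and its angular derivative there equals $1$. A Bloch function is a holomorphic $f$ on $\mathbb D$ with $\sup_{z\in\mathbb D}(1-|z|^2)|f'(z)|<\infty$. *)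

theory Defs
  imports "HOL-Complex_Analysis.Complex_Analysis"
begin

definition self_map_disk :: "(complex \<Rightarrow> complex) \<Rightarrow> bool" where
  "self_map_disk \<phi> \<longleftrightarrow> \<phi> holomorphic_on ball 0 1 \<and> \<phi> ` ball 0 1 \<subseteq> ball 0 1"

definition pseudo_hyp :: "complex \<Rightarrow> complex \<Rightarrow> real" where
  "pseudo_hyp z1 z2 = cmod ((z2 - z1) / (1 - cnj z2 * z1))"

definition stolz_angle :: "complex \<Rightarrow> real \<Rightarrow> complex set" where
  "stolz_angle w M = {z \<in> ball 0 1. cmod (w - z) \<le> M * (1 - cmod z)}"

definition angular_limit :: "(complex \<Rightarrow> complex) \<Rightarrow> complex \<Rightarrow> complex \<Rightarrow> bool" where
  "angular_limit g w L \<longleftrightarrow> (\<forall>M>1. (g \<longlongrightarrow> L) (at w within stolz_angle w M))"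

definition boundary_DW_point :: "(complex \<Rightarrow> complex) \<Rightarrow> complex \<Rightarrow> bool" where
  "boundary_DW_point \<phi> w \<longleftrightarrow> cmod w = 1 \<and>
     (\<forall>z\<in>ball 0 1. (\<lambda>n. (\<phi> ^^ n) z) \<longlonglongrightarrow> w)"

definition angular_derivative_at :: "(complex \<Rightarrow> complex) \<Rightarrow> complex \<Rightarrow> complex \<Rightarrow> bool" where
  "angular_derivative_at \<phi> w d \<longleftrightarrow>
     angular_limit \<phi> w w \<and> angular_limit (\<lambda>z. (\<phi> z - w) / (z - w)) w d"

definition parabolic :: "(complex \<Rightarrow> complex) \<Rightarrow> bool" where
  "parabolic \<phi> \<longleftrightarrow> self_map_disk \<phi> \<and>
     (\<exists>w. boundary_DW_point \<phi> w \<and> angular_derivative_at \<phi> w 1)"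

definition zero_hyperbolic_step :: "(complex \<Rightarrow> complex) \<Rightarrow> bool" where
  "zero_hyperbolic_step \<phi> \<longleftrightarrow>
     (\<exists>z0\<in>ball 0 1. (\<lambda>n. pseudo_hyp ((\<phi> ^^ n) z0) ((\<phi> ^^ Suc n) z0)) \<longlonglongrightarrow> 0)"

definition bloch :: "(complex \<Rightarrow> complex) \<Rightarrow> bool" where
  "bloch f \<longleftrightarrow> f holomorphic_on ball 0 1 \<and>
     bdd_above ((\<lambda>z. (1 - (cmod z)\<^sup>2) * cmod (deriv f z)) ` ball 0 1)"

end

theory Submission
  imports Defs
begin

(*
  Write hyp_deriv g z = (1 - |z|^2) |g'(z)| / (1 - |g z|^2) for the hyperbolic derivative of a
  self-map g of the disk. If f o \<phi> = \<tau> f with |\<tau>| = 1, the chain rule gives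
  (1 - |z|^2) |f'(z)| = (1 - |\<phi>^n z|^2) |f'(\<phi>^n z)| hyp_deriv (\<phi>^n) z, so a Bloch
  eigenfunction has f'(z) = 0 wherever hyp_deriv (\<phi>^n) z can be made arbitrarily small.

  A quantitative Schwarz-Pick lemma shows that hyp_deriv g q is the distance ratio
  \<rho>(g q, g p) / \<rho>(q, p) up to an error 3 \<rho>(q, p). Along an orbit z_n of zero hyperbolic step
  the steps s_n = \<rho>(z_n, z_(n+1)) tend to 0 and are positive (the orbit converges to a point
  of the circle, so it is never stationary); hence hyp_deriv (\<phi>^j) z_k, which is about
  s_(j+k) / s_k, becomes arbitrarily small. As hyp_deriv g is 6-Lipschitz for \<rho>, the same
  holds near z_0, so f' vanishes on an open set and f is constant.
*)

section \<open>Disk automorphisms and the pseudo-hyperbolic distance\<close>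

lemma Moebius_denominator_nonzero:
  assumes "cmod a < 1" "cmod z < 1"
  shows "1 - cnj a * z \<noteq> 0"
proof
  assume "1 - cnj a * z = 0"
  then have "cmod (cnj a * z) = 1"
    by (metis eq_iff_diff_eq_0 norm_one)
  moreover have "cmod (cnj a * z) \<le> cmod z"
    using assms(1) by (simp add: norm_mult mult_left_le_one_le)
  ultimately show False
    using assms(2) by simp
qed

lemma Moebius_function_has_field_derivative:
  assumes "cmod a < 1" "cmod z < 1"
  shows "(Moebius_function t a has_field_derivative
           exp (\<i> * of_real t) * (1 - cnj a * a) / (1 - cnj a * z)\<^sup>2) (at z)"
  using Moebius_denominator_nonzero[OF assms] unfolding Moebius_function_def
  by (auto intro!: derivative_eq_intros simp: power2_eq_square field_simps)

lemma norm_one_minus_cnj_mult_self: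
  assumes "cmod a < 1"
  shows "cmod (1 - cnj a * a) = 1 - (cmod a)\<^sup>2"
proof -
  have "1 - cnj a * a = of_real (1 - (cmod a)\<^sup>2)"
    by (metis complex_norm_square mult.commute of_real_1 of_real_diff)
  moreover have "(cmod a)\<^sup>2 < 1"
    using assms by (simp add: abs_square_less_1)
  ultimately show ?thesis
    by (metis norm_of_real abs_of_pos diff_gt_0_iff_gt)
qed

lemma norm_deriv_Moebius_function:
  assumes "cmod a < 1" "cmod z < 1"
  shows "cmod (deriv (Moebius_function t a) z) = (1 - (cmod a)\<^sup>2) / (cmod (1 - cnj a * z))\<^sup>2"
  using DERIV_imp_deriv[OF Moebius_function_has_field_derivative[OF assms]]
    norm_one_minus_cnj_mult_self[OF assms(1)]
  by (simp add: norm_divide norm_mult norm_power)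

lemma norm_one_minus_cnj_mult_commute: "cmod (1 - cnj w * z) = cmod (1 - cnj z * w)"
  by (metis complex_cnj_cnj complex_cnj_diff complex_cnj_mult complex_cnj_one complex_mod_cnj mult.commute)

lemma pseudo_hyp_eq_norm_Moebius: "pseudo_hyp z1 z2 = cmod (Moebius_function 0 z1 z2)"
  using norm_one_minus_cnj_mult_commute[of z2 z1]
  by (simp add: pseudo_hyp_def Moebius_function_simple norm_divide)

lemma pseudo_hyp_commute: "pseudo_hyp z1 z2 = pseudo_hyp z2 z1"
  using norm_one_minus_cnj_mult_commute[of z2 z1]
  by (simp add: pseudo_hyp_def norm_divide norm_minus_commute)

lemma pseudo_hyp_eq_0_iff:
  assumes "cmod z1 < 1" "cmod z2 < 1"
  shows "pseudo_hyp z1 z2 = 0 \<longleftrightarrow> z1 = z2"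
  using Moebius_denominator_nonzero[OF assms(2,1)] by (auto simp: pseudo_hyp_def)

lemma pseudo_hyp_le_norm_diff:
  assumes "cmod z < 1" "cmod w \<le> 1"
  shows "pseudo_hyp z w \<le> cmod (w - z) / (1 - cmod z)"
proof -
  have "cmod (cnj w * z) \<le> cmod z"
    using assms(2) by (simp add: norm_mult mult_left_le_one_le)
  then have "1 - cmod z \<le> cmod (1 - cnj w * z)"
    using norm_triangle_ineq2[of 1 "cnj w * z"] by simp
  moreover have "0 < 1 - cmod z"
    using assms(1) by simp
  ultimately show ?thesis
    unfolding pseudo_hyp_def norm_divide by (intro divide_left_mono) (auto intro!: mult_pos_pos)
qed

lemma ball_in_pseudo_hyp_ball:
  assumes "cmod z < 1" "\<epsilon> > 0"
  obtains \<delta> where "\<delta> > 0" "ball z \<delta> \<subseteq> ball 0 1" "\<And>w. w \<in> ball z \<delta> \<Longrightarrow> pseudo_hyp z w < \<epsilon>"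
proof
  define \<delta> where "\<delta> = min 1 \<epsilon> * (1 - cmod z)"
  show "\<delta> > 0"
    using assms by (simp add: \<delta>_def)
  have near: "cmod (w - z) < min 1 \<epsilon> * (1 - cmod z)" if "w \<in> ball z \<delta>" for w
    using that by (simp add: \<delta>_def dist_norm norm_minus_commute)
  have "min 1 \<epsilon> * (1 - cmod z) \<le> 1 - cmod z"
    using assms by (intro mult_left_le_one_le) auto
  then have in_disk: "cmod w < 1" if "w \<in> ball z \<delta>" for w
    using near[OF that] norm_triangle_ineq2[of w z] by linarith
  then show "ball z \<delta> \<subseteq> ball 0 1"
    by auto
  fix w assume w: "w \<in> ball z \<delta>"
  have "pseudo_hyp z w \<le> cmod (w - z) / (1 - cmod z)"
    using pseudo_hyp_le_norm_diff[OF assms(1)] in_disk[OF w] by simp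
  also have "\<dots> < \<epsilon>"
  proof -
    have "min 1 \<epsilon> * (1 - cmod z) \<le> \<epsilon> * (1 - cmod z)"
      using assms(1) by (intro mult_right_mono) auto
    then have "cmod (w - z) < \<epsilon> * (1 - cmod z)"
      using near[OF w] by linarith
    then show ?thesis
      using assms(1) by (simp add: pos_divide_less_eq)
  qed
  finally show "pseudo_hyp z w < \<epsilon>" .
qed

section \<open>The hyperbolic derivative\<close>

lemma self_map_diskD:
  assumes "self_map_disk g"
  shows "g holomorphic_on ball 0 1" and "cmod z < 1 \<Longrightarrow> cmod (g z) < 1"
  using assms by (auto simp: self_map_disk_def image_subset_iff)

lemma self_map_disk_field_differentiable:
  assumes "self_map_disk g" "cmod z < 1"
  shows "g field_differentiable at z"
  using assms unfolding self_map_disk_def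
  by (meson holomorphic_on_imp_differentiable_at mem_ball_0 open_ball)

lemma self_map_disk_comp:
  assumes "self_map_disk g" "self_map_disk h"
  shows "self_map_disk (h \<circ> g)"
  using assms holomorphic_on_compose_gen[where f=g and g=h and t="ball 0 1"]
  unfolding self_map_disk_def by fastforce

lemma self_map_disk_funpow: "self_map_disk g \<Longrightarrow> self_map_disk (g ^^ n)"
  by (induction n) (simp_all add: self_map_disk_comp self_map_disk_def[of id])

lemma self_map_disk_Moebius_function: "cmod a < 1 \<Longrightarrow> self_map_disk (Moebius_function t a)"
  using Moebius_function_holomorphic Moebius_function_norm_lt_1
  by (auto simp: self_map_disk_def)

lemma deriv_comp_self_map_disk:
  assumes "self_map_disk g" "self_map_disk h" "cmod z < 1"
  shows "deriv (h \<circ> g) z = deriv h (g z) * deriv g z"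
  using self_map_disk_field_differentiable[OF assms(1,3)]
    self_map_disk_field_differentiable[OF assms(2) self_map_diskD(2)[OF assms(1,3)]]
  by (rule deriv_chain)

definition hyp_deriv :: "(complex \<Rightarrow> complex) \<Rightarrow> complex \<Rightarrow> real" where
  "hyp_deriv g z = (1 - (cmod z)\<^sup>2) * cmod (deriv g z) / (1 - (cmod (g z))\<^sup>2)"

lemma hyp_deriv_nonneg:
  assumes "self_map_disk g" "cmod z < 1"
  shows "0 \<le> hyp_deriv g z"
proof -
  have "(cmod (g z))\<^sup>2 < 1" "(cmod z)\<^sup>2 < 1"
    using self_map_diskD(2)[OF assms] assms(2) by (simp_all add: abs_square_less_1)
  then show ?thesis
    by (simp add: hyp_deriv_def)
qed

lemma hyp_deriv_comp:
  assumes g: "self_map_disk g" and h: "self_map_disk h" and z: "cmod z < 1"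
  shows "hyp_deriv (h \<circ> g) z = hyp_deriv h (g z) * hyp_deriv g z"
proof -
  have "(cmod (g z))\<^sup>2 < 1"
    using self_map_diskD(2)[OF g z] by (simp add: abs_square_less_1)
  then have denom: "1 - (cmod (g z))\<^sup>2 \<noteq> 0"
    by simp
  have regroup: "a * (x * y) / c = (d * x / c) * (a * y / d)" if "d \<noteq> 0" for a x y c d :: real
    using that by (simp add: field_simps)
  show ?thesis
    unfolding hyp_deriv_def deriv_comp_self_map_disk[OF assms] norm_mult comp_apply
    by (rule regroup[OF denom])
qed

lemma hyp_deriv_funpow_add:
  assumes "self_map_disk g" "cmod z < 1"
  shows "hyp_deriv (g ^^ (j + n)) z = hyp_deriv (g ^^ j) ((g ^^ n) z) * hyp_deriv (g ^^ n) z"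
  unfolding funpow_add
  by (rule hyp_deriv_comp[OF self_map_disk_funpow[OF assms(1)] self_map_disk_funpow[OF assms(1)] assms(2)])

lemma norm_deriv_Moebius_conjugate:
  assumes g: "self_map_disk g" and q: "cmod q < 1"
  shows "cmod (deriv (Moebius_function 0 (g q) \<circ> (g \<circ> Moebius_function 0 (-q))) 0) = hyp_deriv g q"
proof -
  define b where "b = g q"
  define G where "G = Moebius_function 0 b \<circ> (g \<circ> Moebius_function 0 (-q))"
  have b: "cmod b < 1"
    using self_map_diskD(2)[OF g q] by (simp add: b_def)
  have Mq: "self_map_disk (Moebius_function 0 (-q))"
    using q by (intro self_map_disk_Moebius_function) simp
  have Mq0: "Moebius_function 0 (-q) 0 = q"
    by (simp add: Moebius_function_of_zero)
  have "deriv G 0 = deriv (Moebius_function 0 b) ((g \<circ> Moebius_function 0 (-q)) 0) *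
      deriv (g \<circ> Moebius_function 0 (-q)) 0"
    unfolding G_def
    by (rule deriv_comp_self_map_disk[OF self_map_disk_comp[OF Mq g] self_map_disk_Moebius_function[OF b]])
      simp
  also have "deriv (g \<circ> Moebius_function 0 (-q)) 0 = deriv g q * deriv (Moebius_function 0 (-q)) 0"
    using deriv_comp_self_map_disk[OF Mq g, of 0] by (simp add: Mq0)
  finally have "deriv G 0 =
      deriv (Moebius_function 0 b) b * (deriv g q * deriv (Moebius_function 0 (-q)) 0)"
    by (simp add: Mq0 b_def)
  moreover have "cmod (deriv (Moebius_function 0 b) b) = 1 / (1 - (cmod b)\<^sup>2)"
    using norm_deriv_Moebius_function[OF b b] norm_one_minus_cnj_mult_self[OF b]
    by (simp add: power2_eq_square)
  moreover have "cmod (deriv (Moebius_function 0 (-q)) 0) = 1 - (cmod q)\<^sup>2"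
    using norm_deriv_Moebius_function[of "-q" 0] q by simp
  ultimately have "cmod (deriv G 0) = hyp_deriv g q"
    by (simp add: hyp_deriv_def norm_mult b_def)
  then show ?thesis
    unfolding G_def b_def .
qed

text \<open>G is g conjugated by the disk automorphisms exchanging 0 with q and g q with 0, and
  \<zeta> is the image of p under the first of them.\<close>

lemma Schwarz_Pick_normalization:
  assumes g: "self_map_disk g" and q: "cmod q < 1" and p: "cmod p < 1"
  obtains G \<zeta> where "self_map_disk G" "G 0 = 0" "cmod (deriv G 0) = hyp_deriv g q"
    "cmod \<zeta> < 1" "cmod \<zeta> = pseudo_hyp q p" "cmod (G \<zeta>) = pseudo_hyp (g q) (g p)"
proof -
  define G where "G = Moebius_function 0 (g q) \<circ> (g \<circ> Moebius_function 0 (-q))"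
  define \<zeta> where "\<zeta> = Moebius_function 0 q p"
  have "self_map_disk G"
    unfolding G_def using self_map_diskD(2)[OF g q] q
    by (intro self_map_disk_comp self_map_disk_Moebius_function g) simp_all
  moreover have "G 0 = 0"
    by (simp add: G_def Moebius_function_of_zero Moebius_function_eq_zero)
  moreover have "cmod (deriv G 0) = hyp_deriv g q"
    unfolding G_def by (rule norm_deriv_Moebius_conjugate[OF g q])
  moreover have "cmod \<zeta> < 1"
    using Moebius_function_norm_lt_1[OF q p] by (simp add: \<zeta>_def)
  moreover have "cmod \<zeta> = pseudo_hyp q p"
    by (simp add: \<zeta>_def pseudo_hyp_eq_norm_Moebius)
  moreover have "cmod (G \<zeta>) = pseudo_hyp (g q) (g p)"
    using Moebius_function_compose[of "-q" q p] q p
    by (simp add: G_def \<zeta>_def pseudo_hyp_eq_norm_Moebius)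
  ultimately show ?thesis
    by (rule that)
qed

lemma hyp_deriv_le_1:
  assumes "self_map_disk g" "cmod z < 1"
  shows "hyp_deriv g z \<le> 1"
proof -
  obtain G where G: "self_map_disk G" "G 0 = 0" "cmod (deriv G 0) = hyp_deriv g z"
    using Schwarz_Pick_normalization[OF assms assms(2)] by metis
  then show ?thesis
    using Schwarz_Lemma(2)[OF self_map_diskD(1)[OF G(1)] G(2) self_map_diskD(2)[OF G(1)], of 0]
    by simp
qed

lemma hyp_deriv_funpow_add_le:
  assumes "self_map_disk g" "cmod z < 1"
  shows "hyp_deriv (g ^^ (j + n)) z \<le> hyp_deriv (g ^^ j) ((g ^^ n) z)"
proof -
  have "cmod ((g ^^ n) z) < 1"
    using self_map_diskD(2)[OF self_map_disk_funpow[OF assms(1)] assms(2)] .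
  then show ?thesis
    unfolding hyp_deriv_funpow_add[OF assms]
    using hyp_deriv_le_1[OF self_map_disk_funpow[OF assms(1)] assms(2)]
      hyp_deriv_nonneg[OF self_map_disk_funpow[OF assms(1)]]
    by (simp add: mult_left_le)
qed

lemma pseudo_hyp_image_le:
  assumes "self_map_disk g" "cmod q < 1" "cmod p < 1"
  shows "pseudo_hyp (g q) (g p) \<le> pseudo_hyp q p"
proof -
  obtain G \<zeta> where G: "self_map_disk G" "G 0 = 0"
    and \<zeta>: "cmod \<zeta> < 1" "cmod \<zeta> = pseudo_hyp q p" "cmod (G \<zeta>) = pseudo_hyp (g q) (g p)"
    using Schwarz_Pick_normalization[OF assms] by metis
  then show ?thesis
    using Schwarz_Lemma(1)[OF self_map_diskD(1)[OF G(1)] G(2) self_map_diskD(2)[OF G(1)] \<zeta>(1)]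
    by simp
qed

text \<open>Write G z = z h z, so that h maps the disk into the closed disk and the left-hand side is
  |h 0 - h \<zeta>|; the Schwarz lemma applies to (h - h 0) / 3, which maps the disk into itself.\<close>

lemma Schwarz_difference_quotient:
  assumes G: "self_map_disk G" and G0: "G 0 = 0" and \<zeta>: "cmod \<zeta> < 1" "\<zeta> \<noteq> 0"
  shows "cmod (deriv G 0 - G \<zeta> / \<zeta>) \<le> 3 * cmod \<zeta>"
proof -
  note holG = self_map_diskD(1)[OF G] and no = self_map_diskD(2)[OF G]
  obtain h where holh: "h holomorphic_on ball 0 1" and Gh: "\<And>z. cmod z < 1 \<Longrightarrow> G z = z * h z"
    and d0: "deriv G 0 = h 0"
    using Schwarz3[OF holG G0] by blast
  have h_le: "cmod (h x) \<le> 1" if "cmod x < 1" for x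
  proof (cases "x = 0")
    case True
    then show ?thesis
      using Schwarz_Lemma(2)[OF holG G0 no, of 0] d0 by simp
  next
    case False
    then show ?thesis
      using Schwarz_Lemma(1)[OF holG G0 no that] Gh[OF that] by (simp add: norm_mult)
  qed
  define u where "u x = (h x - h 0) / 3" for x
  have "u holomorphic_on ball 0 1"
    unfolding u_def by (intro holomorphic_intros holh) auto
  moreover have "cmod (u x) < 1" if "cmod x < 1" for x
    using norm_triangle_ineq4[of "h x" "h 0"] h_le[OF that] h_le[of 0]
    by (simp add: u_def norm_divide)
  ultimately have "cmod (u \<zeta>) \<le> cmod \<zeta>"
    using Schwarz_Lemma(1)[of u \<zeta>] \<zeta>(1) by (simp add: u_def)
  then show ?thesis
    using Gh[OF \<zeta>(1)] \<zeta>(2) d0 by (simp add: u_def norm_divide norm_minus_commute)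
qed

lemma hyp_deriv_approx_distance_ratio:
  assumes "self_map_disk g" "cmod q < 1" "cmod p < 1" "pseudo_hyp q p > 0"
  shows "\<bar>hyp_deriv g q - pseudo_hyp (g q) (g p) / pseudo_hyp q p\<bar> \<le> 3 * pseudo_hyp q p"
proof -
  obtain G \<zeta> where G: "self_map_disk G" "G 0 = 0" "cmod (deriv G 0) = hyp_deriv g q"
    and \<zeta>: "cmod \<zeta> < 1" "cmod \<zeta> = pseudo_hyp q p" "cmod (G \<zeta>) = pseudo_hyp (g q) (g p)"
    using Schwarz_Pick_normalization[OF assms(1-3)] by metis
  have "\<zeta> \<noteq> 0"
    using \<zeta>(2) assms(4) by auto
  then have "cmod (deriv G 0 - G \<zeta> / \<zeta>) \<le> 3 * cmod \<zeta>"
    using Schwarz_difference_quotient[OF G(1,2) \<zeta>(1)] by blast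
  moreover have "\<bar>cmod (deriv G 0) - cmod (G \<zeta> / \<zeta>)\<bar> \<le> cmod (deriv G 0 - G \<zeta> / \<zeta>)"
    by (rule norm_triangle_ineq3)
  ultimately show ?thesis
    using G(3) \<zeta>(2,3) by (simp add: norm_divide)
qed

lemma hyp_deriv_pseudo_hyp_lipschitz:
  assumes g: "self_map_disk g" and p: "cmod p < 1" and q: "cmod q < 1"
  shows "\<bar>hyp_deriv g p - hyp_deriv g q\<bar> \<le> 6 * pseudo_hyp p q"
proof (cases "pseudo_hyp p q > 0")
  case True
  then show ?thesis
    using hyp_deriv_approx_distance_ratio[OF g p q] hyp_deriv_approx_distance_ratio[OF g q p]
    unfolding pseudo_hyp_commute[of q p] pseudo_hyp_commute[of "g q" "g p"] abs_diff_le_iff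
    by linarith
next
  case False
  then have "p = q"
    using pseudo_hyp_eq_0_iff[OF p q] by (simp add: pseudo_hyp_def)
  then show ?thesis
    by (simp add: pseudo_hyp_def)
qed

section \<open>Orbits of zero hyperbolic step\<close>

lemma funpow_fixed_point_limit:
  fixes f :: "'a::t2_space \<Rightarrow> 'a"
  assumes lim: "(\<lambda>n. (f ^^ n) z) \<longlonglongrightarrow> w" and fixed: "f ((f ^^ k) z) = (f ^^ k) z"
  shows "(f ^^ k) z = w"
proof -
  have "(f ^^ (i + k)) z = (f ^^ k) z" for i
    by (induction i) (simp_all add: fixed)
  then have "(\<lambda>i. (f ^^ k) z) \<longlonglongrightarrow> w"
    using LIMSEQ_ignore_initial_segment[OF lim, of k] by simp
  then show ?thesis
    by (simp add: LIMSEQ_const_iff)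
qed

lemma boundary_DW_orbit_step_pos:
  assumes \<phi>: "self_map_disk \<phi>" and DW: "boundary_DW_point \<phi> w" and z: "cmod z < 1"
  shows "pseudo_hyp ((\<phi> ^^ k) z) ((\<phi> ^^ Suc k) z) > 0"
proof -
  have orbit: "cmod ((\<phi> ^^ n) z) < 1" for n
    using self_map_diskD(2)[OF self_map_disk_funpow[OF \<phi>] z] .
  have "(\<phi> ^^ k) z \<noteq> w"
    using orbit[of k] DW by (auto simp: boundary_DW_point_def)
  moreover have "(\<lambda>n. (\<phi> ^^ n) z) \<longlonglongrightarrow> w"
    using DW z by (simp add: boundary_DW_point_def)
  ultimately have "\<phi> ((\<phi> ^^ k) z) \<noteq> (\<phi> ^^ k) z"
    using funpow_fixed_point_limit[of \<phi> z w k] by blast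
  then have "pseudo_hyp ((\<phi> ^^ k) z) ((\<phi> ^^ Suc k) z) \<noteq> 0"
    using pseudo_hyp_eq_0_iff[OF orbit[of k] orbit[of "Suc k"]] by simp
  then show ?thesis
    unfolding pseudo_hyp_def by (simp add: zero_less_norm_iff)
qed

text \<open>Along the orbit z_n of z_0 with steps s_n, the hyperbolic derivative of \<phi>^j at z_k
  is s_(j+k) / s_k up to an error 3 s_k; since s_n \<rightarrow> 0, first choose s_k small and then j
  with s_(j+k) much smaller than s_k.\<close>

lemma hyp_deriv_funpow_orbit_small:
  assumes \<phi>: "self_map_disk \<phi>" and z0: "cmod z0 < 1"
    and step_lim: "(\<lambda>n. pseudo_hyp ((\<phi> ^^ n) z0) ((\<phi> ^^ Suc n) z0)) \<longlonglongrightarrow> 0"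
    and step_pos: "\<And>n. pseudo_hyp ((\<phi> ^^ n) z0) ((\<phi> ^^ Suc n) z0) > 0"
    and \<eta>: "\<eta> > 0"
  shows "\<exists>j. hyp_deriv (\<phi> ^^ j) ((\<phi> ^^ m) z0) < \<eta>"
proof -
  define s where "s n = pseudo_hyp ((\<phi> ^^ n) z0) ((\<phi> ^^ Suc n) z0)" for n
  have orbit: "cmod ((\<phi> ^^ n) z0) < 1" for n
    using self_map_diskD(2)[OF self_map_disk_funpow[OF \<phi>] z0] .
  have s_lim: "\<exists>N. \<forall>n\<ge>N. s n < \<epsilon>" if "\<epsilon> > 0" for \<epsilon>
    using order_tendstoD(2)[OF step_lim that] by (simp add: s_def eventually_sequentially)
  obtain N where N: "\<And>n. n \<ge> N \<Longrightarrow> s n < \<eta> / 4"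
    using s_lim[of "\<eta> / 4"] \<eta> by auto
  define k where "k = max m N"
  have "k \<ge> m" and sk: "s k < \<eta> / 4"
    using N by (simp_all add: k_def)
  have sk_pos: "s k > 0"
    using step_pos by (simp add: s_def)
  obtain j where sjk: "\<And>n. n \<ge> j \<Longrightarrow> s n < s k * \<eta> / 4"
    using s_lim[of "s k * \<eta> / 4"] \<eta> sk_pos by auto
  have "s (j + k) = pseudo_hyp ((\<phi> ^^ (j + k)) z0) ((\<phi> ^^ (j + Suc k)) z0)"
    by (simp add: s_def)
  also have "\<dots> = pseudo_hyp ((\<phi> ^^ j) ((\<phi> ^^ k) z0)) ((\<phi> ^^ j) ((\<phi> ^^ Suc k) z0))"
    by (simp only: funpow_add comp_apply)
  finally have s_jk: "pseudo_hyp ((\<phi> ^^ j) ((\<phi> ^^ k) z0)) ((\<phi> ^^ j) ((\<phi> ^^ Suc k) z0)) = s (j + k)"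
    by simp
  have "hyp_deriv (\<phi> ^^ j) ((\<phi> ^^ k) z0) \<le> s (j + k) / s k + 3 * s k"
    using hyp_deriv_approx_distance_ratio[OF self_map_disk_funpow[OF \<phi>, of j] orbit orbit
        sk_pos[unfolded s_def]]
    unfolding s_jk s_def[of k, symmetric] abs_diff_le_iff by linarith
  also have "\<dots> < \<eta>"
  proof -
    have "s (j + k) / s k < \<eta> / 4"
      using sjk[of "j + k"] sk_pos by (simp add: divide_less_eq mult.commute)
    then show ?thesis
      using sk by linarith
  qed
  finally have small: "hyp_deriv (\<phi> ^^ j) ((\<phi> ^^ k) z0) < \<eta>" .
  have "(\<phi> ^^ (k - m)) ((\<phi> ^^ m) z0) = (\<phi> ^^ (k - m + m)) z0"
    by (simp add: funpow_add)
  then have "hyp_deriv (\<phi> ^^ (j + (k - m))) ((\<phi> ^^ m) z0) \<le> hyp_deriv (\<phi> ^^ j) ((\<phi> ^^ k) z0)"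
    using hyp_deriv_funpow_add_le[OF \<phi> orbit[of m], of j "k - m"] \<open>k \<ge> m\<close> by simp
  then show ?thesis
    using small by (blast intro: order_le_less_trans)
qed

text \<open>Each round halves the hyperbolic derivative at w: pick j with hyp_deriv (\<phi>^j) < 1/8
  at z_n; since \<phi>^n w stays within pseudo-hyperbolic distance 1/16 of z_n, the Lipschitz bound
  gives hyp_deriv (\<phi>^j) < 1/8 + 6/16 = 1/2 at \<phi>^n w.\<close>

lemma hyp_deriv_funpow_near_orbit_small:
  assumes \<phi>: "self_map_disk \<phi>" and z0: "cmod z0 < 1"
    and step_lim: "(\<lambda>n. pseudo_hyp ((\<phi> ^^ n) z0) ((\<phi> ^^ Suc n) z0)) \<longlonglongrightarrow> 0"
    and step_pos: "\<And>n. pseudo_hyp ((\<phi> ^^ n) z0) ((\<phi> ^^ Suc n) z0) > 0"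
    and w: "cmod w < 1" and near: "pseudo_hyp z0 w < 1/16" and \<eta>: "\<eta> > 0"
  shows "\<exists>n. hyp_deriv (\<phi> ^^ n) w < \<eta>"
proof -
  have iter: "self_map_disk (\<phi> ^^ n)" for n
    using self_map_disk_funpow[OF \<phi>] .
  have halving: "\<exists>n. hyp_deriv (\<phi> ^^ n) w \<le> (1/2) ^ K" for K
  proof (induction K)
    case 0
    show ?case
      using hyp_deriv_le_1[OF iter w] by auto
  next
    case (Suc K)
    then obtain n where n: "hyp_deriv (\<phi> ^^ n) w \<le> (1/2) ^ K"
      by blast
    define zn wn where "zn = (\<phi> ^^ n) z0" and "wn = (\<phi> ^^ n) w"
    have zn: "cmod zn < 1" and wn: "cmod wn < 1"
      using self_map_diskD(2)[OF iter] z0 w by (simp_all add: zn_def wn_def)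
    obtain j where j: "hyp_deriv (\<phi> ^^ j) zn < 1/8"
      using hyp_deriv_funpow_orbit_small[OF \<phi> z0 step_lim step_pos, of "1/8" n] zn_def by auto
    have "pseudo_hyp zn wn < 1/16"
      using pseudo_hyp_image_le[OF iter z0 w, of n] near by (simp add: zn_def wn_def)
    then have "hyp_deriv (\<phi> ^^ j) wn \<le> 1/2"
      using hyp_deriv_pseudo_hyp_lipschitz[OF iter wn zn, of j] j pseudo_hyp_commute[of zn wn]
      by (simp add: abs_le_iff)
    then have "hyp_deriv (\<phi> ^^ j) wn * hyp_deriv (\<phi> ^^ n) w \<le> 1/2 * (1/2) ^ K"
      using n hyp_deriv_nonneg[OF iter wn] hyp_deriv_nonneg[OF iter w] by (intro mult_mono) auto
    then have "hyp_deriv (\<phi> ^^ (j + n)) w \<le> (1/2) ^ Suc K"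
      using hyp_deriv_funpow_add[OF \<phi> w, of j n] by (simp add: wn_def)
    then show ?case
      by blast
  qed
  obtain K :: nat where "(1/2) ^ K < \<eta>"
    using real_arch_pow_inv[OF \<eta>, of "1/2"] by auto
  moreover obtain n where "hyp_deriv (\<phi> ^^ n) w \<le> (1/2) ^ K"
    using halving by blast
  ultimately show ?thesis
    by (meson order_le_less_trans)
qed

section \<open>Bloch eigenfunctions\<close>

lemma eigenfunction_funpow:
  fixes f :: "complex \<Rightarrow> complex"
  assumes \<phi>: "self_map_disk \<phi>" and eigen: "\<And>z. cmod z < 1 \<Longrightarrow> f (\<phi> z) = \<tau> * f z"
    and z: "cmod z < 1"
  shows "f ((\<phi> ^^ n) z) = \<tau> ^ n * f z"
proof (induction n)
  case (Suc n)
  then show ?case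
    using eigen[OF self_map_diskD(2)[OF self_map_disk_funpow[OF \<phi>] z]] by simp
qed simp

lemma eigenfunction_bloch_density_funpow:
  assumes \<phi>: "self_map_disk \<phi>" and holf: "f holomorphic_on ball 0 1"
    and eigen: "\<And>z. cmod z < 1 \<Longrightarrow> f (\<phi> z) = \<tau> * f z" and \<tau>: "cmod \<tau> = 1"
    and w: "cmod w < 1"
  shows "(1 - (cmod w)\<^sup>2) * cmod (deriv f w) =
    (1 - (cmod ((\<phi> ^^ n) w))\<^sup>2) * cmod (deriv f ((\<phi> ^^ n) w)) * hyp_deriv (\<phi> ^^ n) w"
proof -
  have iter: "self_map_disk (\<phi> ^^ n)"
    using self_map_disk_funpow[OF \<phi>] .
  define wn where "wn = (\<phi> ^^ n) w"
  have wn: "cmod wn < 1"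
    using self_map_diskD(2)[OF iter w] by (simp add: wn_def)
  have f_diff: "f field_differentiable at z" if "cmod z < 1" for z
    using holf that by (meson holomorphic_on_imp_differentiable_at mem_ball_0 open_ball)
  have "deriv (f \<circ> (\<phi> ^^ n)) w = deriv (\<lambda>z. \<tau> ^ n * f z) w"
  proof (rule deriv_cong_ev)
    have "\<forall>\<^sub>F z in nhds w. z \<in> ball 0 1"
      using w by (intro eventually_nhds_in_open) auto
    then show "\<forall>\<^sub>F z in nhds w. (f \<circ> (\<phi> ^^ n)) z = \<tau> ^ n * f z"
      by eventually_elim (simp add: eigenfunction_funpow[where f=f and \<tau>=\<tau>, OF \<phi> eigen])
  qed simp
  then have "\<tau> ^ n * deriv f w = deriv f wn * deriv (\<phi> ^^ n) w"
    using deriv_chain[OF self_map_disk_field_differentiable[OF iter w] f_diff[OF wn[unfolded wn_def]]]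
      f_diff[OF w] by (simp add: wn_def)
  then have "cmod (deriv f w) = cmod (deriv f wn) * cmod (deriv (\<phi> ^^ n) w)"
    by (metis norm_mult norm_power \<tau> power_one mult_1)
  moreover have "(cmod wn)\<^sup>2 < 1"
    using wn by (simp add: abs_square_less_1)
  ultimately show ?thesis
    by (simp add: hyp_deriv_def wn_def[symmetric])
qed

lemma nonpos_if_le_mult_arbitrarily_small:
  fixes v C :: real and a :: "nat \<Rightarrow> real"
  assumes le: "\<And>n. v \<le> C * a n" and C: "C \<ge> 0" and small: "\<And>\<eta>. \<eta> > 0 \<Longrightarrow> \<exists>n. a n < \<eta>"
  shows "v \<le> 0"
proof (rule ccontr)
  assume "\<not> v \<le> 0"
  then obtain n where n: "a n < v / (C + 1)"
    using small[of "v / (C + 1)"] C by auto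
  have "v \<le> C * a n"
    by (rule le)
  also have "\<dots> \<le> C * (v / (C + 1))"
    using n C by (intro mult_left_mono) auto
  also have "\<dots> < v"
    using \<open>\<not> v \<le> 0\<close> C by (simp add: field_simps)
  finally show False
    by simp
qed

lemma bloch_eigenfunction_deriv_eq_0:
  assumes \<phi>: "self_map_disk \<phi>" and f: "bloch f"
    and eigen: "\<And>z. cmod z < 1 \<Longrightarrow> f (\<phi> z) = \<tau> * f z" and \<tau>: "cmod \<tau> = 1"
    and w: "cmod w < 1" and small: "\<And>\<eta>. \<eta> > 0 \<Longrightarrow> \<exists>n. hyp_deriv (\<phi> ^^ n) w < \<eta>"
  shows "deriv f w = 0"
proof -
  obtain B where "\<forall>z\<in>ball 0 1. (1 - (cmod z)\<^sup>2) * cmod (deriv f z) \<le> B"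
    using f by (auto simp: bloch_def bdd_above_def)
  then have B: "\<And>z. cmod z < 1 \<Longrightarrow> (1 - (cmod z)\<^sup>2) * cmod (deriv f z) \<le> B"
    by simp
  have holf: "f holomorphic_on ball 0 1"
    using f by (simp add: bloch_def)
  define v where "v = (1 - (cmod w)\<^sup>2) * cmod (deriv f w)"
  have v_le: "v \<le> \<bar>B\<bar> * hyp_deriv (\<phi> ^^ n) w" for n
  proof -
    have wn: "cmod ((\<phi> ^^ n) w) < 1"
      using self_map_diskD(2)[OF self_map_disk_funpow[OF \<phi>] w] .
    have "v = (1 - (cmod ((\<phi> ^^ n) w))\<^sup>2) * cmod (deriv f ((\<phi> ^^ n) w)) * hyp_deriv (\<phi> ^^ n) w"
      unfolding v_def by (rule eigenfunction_bloch_density_funpow[OF \<phi> holf eigen \<tau> w])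
    also have "\<dots> \<le> \<bar>B\<bar> * hyp_deriv (\<phi> ^^ n) w"
      using order_trans[OF B[OF wn] abs_ge_self] hyp_deriv_nonneg[OF self_map_disk_funpow[OF \<phi>] w]
      by (rule mult_right_mono)
    finally show ?thesis .
  qed
  have "v \<le> 0"
    using v_le abs_ge_zero small by (rule nonpos_if_le_mult_arbitrarily_small)
  moreover have "0 < 1 - (cmod w)\<^sup>2"
    using w by (simp add: abs_square_less_1)
  ultimately have "cmod (deriv f w) \<le> 0"
    unfolding v_def by (metis mult_le_cancel_left_pos mult_zero_right)
  then show ?thesis
    by simp
qed

lemma holomorphic_eq_if_deriv_vanishes_on_ball:
  assumes holf: "f holomorphic_on S" and S: "open S" "connected S"
    and \<delta>: "\<delta> > 0" "ball z \<delta> \<subseteq> S" and deriv0: "\<And>w. w \<in> ball z \<delta> \<Longrightarrow> deriv f w = 0"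
    and x: "x \<in> S"
  shows "f x = f z"
proof -
  have "(f has_field_derivative 0) (at w within ball z \<delta>)" if "w \<in> ball z \<delta>" for w
    using holomorphic_derivI[OF holf S(1)] \<delta>(2) deriv0 that
    by (metis subsetD)
  then obtain c where c: "\<And>w. w \<in> ball z \<delta> \<Longrightarrow> f w = c"
    using has_field_derivative_zero_constant[of "ball z \<delta>" f] by auto
  have "f x = c"
    using analytic_continuation_open[of "ball z \<delta>" S f "\<lambda>_. c" x] \<delta> S holf c x by auto
  then show ?thesis
    using c[of z] \<delta>(1) by simp
qed

theorem theorem5p3:
  fixes \<phi> :: "complex \<Rightarrow> complex"
  assumes "self_map_disk \<phi>" and "parabolic \<phi>" and "zero_hyperbolic_step \<phi>"
  shows "\<not> (\<exists>f \<tau>. bloch f \<and> (\<exists>z1\<in>ball 0 1. \<exists>z2\<in>ball 0 1. f z1 \<noteq> f z2) \<and>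
              cmod \<tau> = 1 \<and> (\<forall>z\<in>ball 0 1. f (\<phi> z) = \<tau> * f z))"
proof
  assume "\<exists>f \<tau>. bloch f \<and> (\<exists>z1\<in>ball 0 1. \<exists>z2\<in>ball 0 1. f z1 \<noteq> f z2) \<and>
              cmod \<tau> = 1 \<and> (\<forall>z\<in>ball 0 1. f (\<phi> z) = \<tau> * f z)"
  then obtain f \<tau> z1 z2 where f: "bloch f" and z12: "z1 \<in> ball 0 1" "z2 \<in> ball 0 1" "f z1 \<noteq> f z2"
    and \<tau>: "cmod \<tau> = 1" and eigen: "\<And>z. cmod z < 1 \<Longrightarrow> f (\<phi> z) = \<tau> * f z"
    by auto
  note \<phi> = assms(1)
  have holf: "f holomorphic_on ball 0 1"
    using f by (simp add: bloch_def)
  obtain \<omega> where DW: "boundary_DW_point \<phi> \<omega>"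
    using assms(2) by (auto simp: parabolic_def)
  obtain z0 where z0: "cmod z0 < 1"
    and step_lim: "(\<lambda>n. pseudo_hyp ((\<phi> ^^ n) z0) ((\<phi> ^^ Suc n) z0)) \<longlonglongrightarrow> 0"
    using assms(3) by (auto simp: zero_hyperbolic_step_def)
  note step_pos = boundary_DW_orbit_step_pos[OF \<phi> DW z0]
  have "(1/16 :: real) > 0"
    by simp
  then obtain \<delta> where \<delta>: "\<delta> > 0" "ball z0 \<delta> \<subseteq> ball 0 1"
    and near: "\<And>w. w \<in> ball z0 \<delta> \<Longrightarrow> pseudo_hyp z0 w < 1/16"
    using ball_in_pseudo_hyp_ball[OF z0] by blast
  have deriv0: "deriv f w = 0" if w: "w \<in> ball z0 \<delta>" for w
  proof (rule bloch_eigenfunction_deriv_eq_0[OF \<phi> f eigen \<tau>])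
    show "cmod w < 1"
      using \<delta>(2) w by auto
    then show "\<exists>n. hyp_deriv (\<phi> ^^ n) w < \<eta>" if "\<eta> > 0" for \<eta>
      by (rule hyp_deriv_funpow_near_orbit_small[OF \<phi> z0 step_lim step_pos _ near[OF w] that])
  qed
  have "f z = f z0" if "z \<in> ball 0 1" for z
    by (rule holomorphic_eq_if_deriv_vanishes_on_ball[OF holf open_ball connected_ball \<delta> deriv0 that])
  then show False
    using z12 by metis
qed

end
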